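(* Let $N\ge 2$, $\lambda\ne 0$, and for $x,p\in\mathbb{C}^N$ set $$L_k(x,p;\lambda)=I+\lambda^{-1}\begin{pmatrix}p_kx_k & -p_kx_k^2\\ p_k & -p_kx_k\end{pmatrix},\qquad T_N(x,p;\lambda)=L_N(x,p;\lambda)\cdots L_1(x,p;\lambda).$$ (a) Periodic case: if $\widetilde{x}\in\mathbb{C}^N$ satisfies $p_k=\frac{\lambda}{\widetilde{x}_k-x_k}+\frac{\lambda}{x_k-\widetilde{x}_{k-1}}$ for $k=1,\dots,N$ with $\widetilde x_0=\widetilde x_N$, $x_{N+1}=x_1$, then $$\frac{\prod_{k=1}^N(\widetilde{x}_k-x_{k+1})}{\prod_{k=1}^N(\widetilde{x}_k-x_k)}$$ is an eigenvalue of $T_N(x,p;\lambda)$. (b) Open-end case: if $\widetilde{x}\in\mathbb{C}^N$ satisfies $p_1=\frac{\lambda}{\widetilde{x}_1-x_1}$ and $p_k=\frac{\lambda}{\widetilde{x}_k-x_k}+\frac{\lambda}{x_k-\widetilde{x}_{k-1}}$ for $k=2,\dots,N$, then the $(2,1)$-entry of $T_N(x,p;\lambda)$ equals $$\frac{\prod_{k=1}^{N-1}(\widetilde{x}_k-x_{k+1})}{\prod_{k=1}^N(\widetilde{x}_k-x_k)}.$$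
   Context: $I$ is the $2\times2$ identity matrix. The relation between $(x,p)$ and $\widetilde x$ is the first half of the Bäcklund transformation $F_\lambda$ of the symmetric rational additive Toda-type system $\ddot x_k=-\dot x_k^2\big(\frac{1}{x_{k+1}-x_k}-\frac{1}{x_k-x_{k-1}}\big)$. *)

theory Defs
  imports "HOL-Analysis.Analysis"
begin

text \<open>Lax matrix L_k(x,p;lam) = I + lam^{-1} [[p_k x_k, -p_k x_k^2],[p_k, -p_k x_k]].
  Vectors x, p in C^N are modelled as functions nat => complex, indices 1..N used.\<close>
definition lax_L :: "(nat \<Rightarrow> complex) \<Rightarrow> (nat \<Rightarrow> complex) \<Rightarrow> complex \<Rightarrow> nat \<Rightarrow> complex^2^2" where
  "lax_L x p lam k = mat 1 +
     (\<chi> i j. inverse lam * (if i = 1 then (if j = 1 then p k * x k else - p k * (x k)^2)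
             else (if j = 1 then p k else - p k * x k)))"

fun monodromy :: "(nat \<Rightarrow> complex) \<Rightarrow> (nat \<Rightarrow> complex) \<Rightarrow> complex \<Rightarrow> nat \<Rightarrow> complex^2^2" where
  "monodromy x p lam 0 = mat 1"
| "monodromy x p lam (Suc n) = lax_L x p lam (Suc n) ** monodromy x p lam n"

definition is_eigenvalue :: "complex^2^2 \<Rightarrow> complex \<Rightarrow> bool" where
  "is_eigenvalue A mu \<longleftrightarrow> (\<exists>v. v \<noteq> 0 \<and> A *v v = mu *s v)"

end

theory Submission imports Defs begin

text \<open>Write \<open>y\<close> for \<open>x\<close> with a tilde. Since
  \<open>L\<^sub>k = I + (p\<^sub>k/\<lambda>) (x\<^sub>k, 1)\<^sup>T (1, -x\<^sub>k)\<close>, the matrix \<open>L\<^sub>k\<close> acts on the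
  projective line as a Moebius map, and the relation between \<open>p\<^sub>k\<close>, \<open>y\<^sub>k\<^sub>-\<^sub>1\<close> and
  \<open>y\<^sub>k\<close> says exactly that \<open>L\<^sub>k (y\<^sub>k\<^sub>-\<^sub>1, 1) = (y\<^sub>k\<^sub>-\<^sub>1 - x\<^sub>k)/(y\<^sub>k - x\<^sub>k) \<cdot> (y\<^sub>k, 1)\<close>.
  Composing, the monodromy maps \<open>(y\<^sub>0, 1)\<close> to the product of these multipliers times
  \<open>(y\<^sub>N, 1)\<close>. In the periodic case \<open>y\<^sub>0 = y\<^sub>N\<close>, so the product is an eigenvalue. In the
  open-end case the chain starts from the point at infinity \<open>e\<^sub>1\<close>, which \<open>L\<^sub>1\<close> sends to
  \<open>(y\<^sub>1, 1)/(y\<^sub>1 - x\<^sub>1)\<close>; the \<open>(2,1)\<close>-entry of the monodromy is the second coordinate of the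
  image of \<open>e\<^sub>1\<close>.\<close>

definition homog :: "complex \<Rightarrow> complex^2" where
  "homog a = (\<chi> i. if i = 1 then a else 1)"

lemma homog_nonzero: "homog a \<noteq> 0"
proof
  assume "homog a = 0"
  then have "homog a $ 2 = 0" by simp
  then show False by (simp add: homog_def)
qed

lemma lax_L_mult_homog:
  assumes "lam \<noteq> 0" "b \<noteq> x k" "x k \<noteq> a" "p k = lam / (b - x k) + lam / (x k - a)"
  shows "lax_L x p lam k *v homog a = ((a - x k) / (b - x k)) *s homog b"
proof -
  define d1 where "d1 = b - x k"
  define d2 where "d2 = x k - a"
  have "d1 \<noteq> 0" "d2 \<noteq> 0" using assms unfolding d1_def d2_def by auto
  moreover have ab: "b = x k + d1" "a = x k - d2" unfolding d1_def d2_def by auto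
  moreover have pk: "p k = lam * (1/d1 + 1/d2)"
    using assms(1,4) unfolding d1_def d2_def by (simp add: field_simps)
  ultimately show ?thesis
    using assms(1) unfolding ab
    by (simp add: vec_eq_iff forall_2 lax_L_def homog_def matrix_vector_mult_def sum_2 mat_def pk
        field_simps power2_eq_square)
qed

lemma lax_L_mult_axis_1:
  assumes "lam \<noteq> 0" "b \<noteq> x k" "p k = lam / (b - x k)"
  shows "lax_L x p lam k *v axis 1 1 = (1 / (b - x k)) *s homog b"
proof -
  define d where "d = b - x k"
  have "d \<noteq> 0" using assms unfolding d_def by auto
  moreover have b: "b = x k + d" unfolding d_def by auto
  moreover have pk: "p k = lam / d" using assms unfolding d_def by simp
  ultimately show ?thesis
    using assms(1) unfolding b
    by (simp add: vec_eq_iff forall_2 lax_L_def homog_def axis_def matrix_vector_mult_def sum_2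
        mat_def pk field_simps power2_eq_square)
qed

lemma monodromy_Suc_mult_vec:
  "monodromy x p lam (Suc n) *v v = lax_L x p lam (Suc n) *v (monodromy x p lam n *v v)"
  by (simp add: matrix_vector_mul_assoc)

lemma monodromy_mult_homog_chain:
  assumes "lam \<noteq> 0" "m \<le> n"
    and start: "monodromy x p lam m *v v = c *s homog (a m)"
    and chain: "\<forall>k\<in>{Suc m..n}. a k \<noteq> x k \<and> x k \<noteq> a (k - 1)
                  \<and> p k = lam / (a k - x k) + lam / (x k - a (k - 1))"
  shows "monodromy x p lam n *v v
           = (c * (\<Prod>k=Suc m..n. (a (k - 1) - x k) / (a k - x k))) *s homog (a n)"
  using assms(2) chain
proof (induction n rule: dec_induct)
  case base
  then show ?case using start by simp
next
  case (step n)
  have "a (Suc n) \<noteq> x (Suc n) \<and> x (Suc n) \<noteq> a n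
      \<and> p (Suc n) = lam / (a (Suc n) - x (Suc n)) + lam / (x (Suc n) - a n)"
    using bspec[OF step.prems, of "Suc n"] step.hyps by simp
  then have L: "lax_L x p lam (Suc n) *v homog (a n)
                  = ((a n - x (Suc n)) / (a (Suc n) - x (Suc n))) *s homog (a (Suc n))"
    by (simp add: lax_L_mult_homog[OF assms(1)])
  have chain_n: "\<forall>k\<in>{Suc m..n}. a k \<noteq> x k \<and> x k \<noteq> a (k - 1)
                  \<and> p k = lam / (a k - x k) + lam / (x k - a (k - 1))"
    using step.prems by auto
  show ?case
    unfolding monodromy_Suc_mult_vec step.IH[OF chain_n] vector_scalar_commute L
    using step.hyps by (simp add: prod.cl_ivl_Suc vector_smult_assoc mult.assoc)
qed

lemma periodic_eigenvalue:
  fixes xt :: "nat \<Rightarrow> complex"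
  assumes "N \<ge> 1" "lam \<noteq> 0"
    and "\<forall>k\<in>{1..N}. xt k \<noteq> x k"
    and "\<forall>k\<in>{1..N}. x k \<noteq> (if k = 1 then xt N else xt (k - 1))"
    and "\<forall>k\<in>{1..N}. p k = lam / (xt k - x k)
                           + lam / (x k - (if k = 1 then xt N else xt (k - 1)))"
  shows "is_eigenvalue (monodromy x p lam N)
           ((\<Prod>k=1..N. xt k - (if k = N then x 1 else x (k + 1))) / (\<Prod>k=1..N. xt k - x k))"
proof -
  define a where "a k = (if k = 0 then xt N else xt k)" for k
  have "\<forall>k\<in>{1..N}. a k = xt k \<and> a (k - 1) = (if k = 1 then xt N else xt (k - 1))"
    by (auto simp: a_def)
  then have "monodromy x p lam N *v homog (a 0)
               = (\<Prod>k=1..N. (a (k - 1) - x k) / (a k - x k)) *s homog (a N)"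
    using monodromy_mult_homog_chain[of lam 0 N x p "homog (a 0)" 1 a] assms by simp
  moreover have "a 0 = xt N" "a N = xt N" using assms(1) by (auto simp: a_def)
  moreover have "(\<Prod>k=1..N. a k - x k) = (\<Prod>k=1..N. xt k - x k)"
    by (rule prod.cong) (auto simp: a_def)
  moreover have "(\<Prod>k=1..N. a (k - 1) - x k) = (\<Prod>k=1..N. xt k - (if k = N then x 1 else x (k + 1)))"
  proof -
    have "(\<Prod>k=1..N. a (k - 1) - x k) = (xt N - x 1) * (\<Prod>k=Suc 1..N. xt (k - 1) - x k)"
      using assms(1) by (simp add: prod.atLeast_Suc_atMost a_def)
    also have "(\<Prod>k=Suc 1..N. xt (k - 1) - x k) = (\<Prod>k=1..N-1. xt k - x (k + 1))"
      using assms(1) prod.shift_bounds_cl_Suc_ivl[of "\<lambda>k. xt (k - 1) - x k" 1 "N - 1"] by simp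
    also have "\<dots> = (\<Prod>k=1..N-1. xt k - (if k = N then x 1 else x (k + 1)))"
      by (rule prod.cong) auto
    also have "(xt N - x 1) * \<dots> = (\<Prod>k=1..N. xt k - (if k = N then x 1 else x (k + 1)))"
      using assms(1)
        prod.cl_ivl_Suc[of "\<lambda>k. xt k - (if k = N then x 1 else x (k + 1))" 1 "N - 1"]
      by (simp add: mult.commute)
    finally show ?thesis .
  qed
  ultimately have "monodromy x p lam N *v homog (xt N)
     = ((\<Prod>k=1..N. xt k - (if k = N then x 1 else x (k + 1))) / (\<Prod>k=1..N. xt k - x k))
         *s homog (xt N)"
    by (simp only: prod_dividef)
  then show ?thesis
    unfolding is_eigenvalue_def using homog_nonzero by blast
qed

lemma open_end_entry:
  fixes xt :: "nat \<Rightarrow> complex"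
  assumes "N \<ge> 1" "lam \<noteq> 0"
    and "\<forall>k\<in>{1..N}. xt k \<noteq> x k"
    and "\<forall>k\<in>{2..N}. x k \<noteq> xt (k - 1)"
    and "p 1 = lam / (xt 1 - x 1)"
    and "\<forall>k\<in>{2..N}. p k = lam / (xt k - x k) + lam / (x k - xt (k - 1))"
  shows "monodromy x p lam N $ 2 $ 1
           = (\<Prod>k=1..N-1. xt k - x (k + 1)) / (\<Prod>k=1..N. xt k - x k)"
proof -
  have start: "monodromy x p lam 1 *v axis 1 1 = (1 / (xt 1 - x 1)) *s homog (xt 1)"
    using lax_L_mult_axis_1[of lam "xt 1" x 1 p] assms by (simp add: monodromy_Suc_mult_vec)
  have chain: "\<forall>k\<in>{Suc 1..N}. xt k \<noteq> x k \<and> x k \<noteq> xt (k - 1)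
                  \<and> p k = lam / (xt k - x k) + lam / (x k - xt (k - 1))"
    using assms by auto
  have "monodromy x p lam N *v axis 1 1
      = (1 / (xt 1 - x 1) * (\<Prod>k=Suc 1..N. (xt (k - 1) - x k) / (xt k - x k))) *s homog (xt N)"
    by (rule monodromy_mult_homog_chain[OF assms(2,1) start chain])
  moreover have "monodromy x p lam N $ 2 $ 1 = (monodromy x p lam N *v axis 1 1) $ 2"
    by (simp add: matrix_vector_mult_def sum_2 axis_def)
  moreover have "(\<Prod>k=1..N. xt k - x k) = (xt 1 - x 1) * (\<Prod>k=Suc 1..N. xt k - x k)"
    by (rule prod.atLeast_Suc_atMost[OF assms(1)])
  moreover have "(\<Prod>k=Suc 1..N. xt (k - 1) - x k) = (\<Prod>k=1..N-1. xt k - x (k + 1))"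
    using assms(1) prod.shift_bounds_cl_Suc_ivl[of "\<lambda>k. xt (k - 1) - x k" 1 "N - 1"] by simp
  ultimately show ?thesis by (simp add: homog_def prod_dividef)
qed

theorem theorem12:
  fixes N :: nat and lam :: complex and x p :: "nat \<Rightarrow> complex"
  assumes "N \<ge> 2" and "lam \<noteq> 0"
  shows
   "(\<forall>xt :: nat \<Rightarrow> complex.
      ((\<forall>k\<in>{1..N}. xt k \<noteq> x k) \<and>
       (\<forall>k\<in>{1..N}. x k \<noteq> (if k = 1 then xt N else xt (k - 1))) \<and>
       (\<forall>k\<in>{1..N}. p k = lam / (xt k - x k)
                         + lam / (x k - (if k = 1 then xt N else xt (k - 1)))))
      \<longrightarrow> is_eigenvalue (monodromy x p lam N)
            ((\<Prod>k=1..N. xt k - (if k = N then x 1 else x (k + 1))) / (\<Prod>k=1..N. xt k - x k)))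
    \<and>
    (\<forall>xt :: nat \<Rightarrow> complex.
      ((\<forall>k\<in>{1..N}. xt k \<noteq> x k) \<and>
       (\<forall>k\<in>{2..N}. x k \<noteq> xt (k - 1)) \<and>
       p 1 = lam / (xt 1 - x 1) \<and>
       (\<forall>k\<in>{2..N}. p k = lam / (xt k - x k) + lam / (x k - xt (k - 1))))
      \<longrightarrow> monodromy x p lam N $ 2 $ 1
            = (\<Prod>k=1..N-1. xt k - x (k + 1)) / (\<Prod>k=1..N. xt k - x k))"
proof -
  have "N \<ge> 1" using assms(1) by simp
  then show ?thesis
    using periodic_eigenvalue[of N lam] open_end_entry[of N lam] assms(2) by blast
qed

end
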